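(* Let $A(q,x)$, $B(q,x)$, $C(q,x)$ be the generating series $\sum_{n\ge0}\sum_{\gamma\in\mathcal{D}_n}q^{\#w(\gamma)}x^n$ for $w=dduu$, $w=dudu$, $w=duuu$ respectively; let $V(q,x)=\sum_{n\ge0}\sum_{\gamma\in\mathcal{D}_n}q^{\#du(\gamma)}x^n$; and let $F(y,q,x)=\sum_{n\ge0}\sum_{\gamma\in\mathcal{D}_n}y^{\#du(\gamma)}q^{\#duu(\gamma)}x^n$. Here $\#w(\gamma)$ is the number of occurrences of the factor $w$ in $\gamma$. Let $SC_3(x)=\sum_{n\ge0}sc_3(\mathcal{D}_n)x^n$, where $sc_3(\mathcal{D}_n)$ is the number of saturated chains of length 3 in $\mathcal{D}_n$. Then $$ SC_3(x)=2\left[\frac{\partial A}{\partial q}\right]_{q=1}+2\left[\frac{\partial B}{\partial q}\right]_{q=1}+2\left[\frac{\partial C}{\partial q}\right]_{q=1}+\left[\frac{\partial^3 V}{\partial q^3}\right]_{q=1}+6\left[\frac{\partial^2 F}{\partial y\,\partial q}-\frac{\partial F}{\partial q}\right]_{y=q=1}. $$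
   Context: A Dyck path of semilength $n$ is a lattice path from $(0,0)$ to $(2n,0)$ with steps $u=(1,1)$ and $d=(1,-1)$ never going below the $x$-axis, identified with a word over $\{u,d\}$. $\mathcal{D}_n$ is the set of Dyck paths of semilength $n$ ordered by containment: $\gamma\le\gamma'$ iff $\gamma$ lies weakly below $\gamma'$. A saturated chain of length $h$ is a sequence $\gamma^{(0)}<\cdots<\gamma^{(h)}$ in which each element covers the previous one. *)

theory Defs
  imports "HOL-Computational_Algebra.Polynomial" "HOL-Computational_Algebra.Formal_Power_Series"
begin

text \<open>Dyck words: a word over {u,d} is a list of booleans, True = u = (1,1), False = d = (1,-1).\<close>

abbreviation u_step :: bool where "u_step \<equiv> True"
abbreviation d_step :: bool where "d_step \<equiv> False"

definition height :: "bool list \<Rightarrow> nat \<Rightarrow> int" where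
  "height \<gamma> i = (\<Sum>j<i. if \<gamma> ! j then 1 else -1)"

definition dyck_paths :: "nat \<Rightarrow> bool list set" where
  "dyck_paths n = {\<gamma>. length \<gamma> = 2 * n \<and> (\<forall>i \<le> 2 * n. 0 \<le> height \<gamma> i) \<and> height \<gamma> (2 * n) = 0}"

definition path_le :: "bool list \<Rightarrow> bool list \<Rightarrow> bool" where
  "path_le \<gamma> \<gamma>' \<longleftrightarrow> (\<forall>i \<le> length \<gamma>. height \<gamma> i \<le> height \<gamma>' i)"

definition covers :: "nat \<Rightarrow> bool list \<Rightarrow> bool list \<Rightarrow> bool" where
  "covers n a b \<longleftrightarrow> a \<in> dyck_paths n \<and> b \<in> dyck_paths n \<and> path_le a b \<and> a \<noteq> b \<and>
     \<not> (\<exists>c \<in> dyck_paths n. c \<noteq> a \<and> c \<noteq> b \<and> path_le a c \<and> path_le c b)"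

definition sat_chains :: "nat \<Rightarrow> nat \<Rightarrow> bool list list set" where
  "sat_chains n h = {cs. length cs = h + 1 \<and> set cs \<subseteq> dyck_paths n \<and>
     (\<forall>i < h. covers n (cs ! i) (cs ! (i + 1)))}"

definition sc :: "nat \<Rightarrow> nat \<Rightarrow> nat" where
  "sc h n = card (sat_chains n h)"

definition occ :: "bool list \<Rightarrow> bool list \<Rightarrow> nat" where
  "occ w \<gamma> = card {i. i + length w \<le> length \<gamma> \<and> take (length w) (drop i \<gamma>) = w}"

definition gf_factor :: "bool list \<Rightarrow> int poly fps" where
  "gf_factor w = Abs_fps (\<lambda>n. \<Sum>\<gamma>\<in>dyck_paths n. monom 1 (occ w \<gamma>))"

definition A_series :: "int poly fps" where
  "A_series = gf_factor [d_step, d_step, u_step, u_step]"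
definition B_series :: "int poly fps" where
  "B_series = gf_factor [d_step, u_step, d_step, u_step]"
definition C_series :: "int poly fps" where
  "C_series = gf_factor [d_step, u_step, u_step, u_step]"
definition V_series :: "int poly fps" where
  "V_series = gf_factor [d_step, u_step]"

text \<open>F(y,q,x): coefficients are polynomials in y (outer) whose coefficients are polynomials in q.\<close>
definition F_series :: "int poly poly fps" where
  "F_series = Abs_fps (\<lambda>n. \<Sum>\<gamma>\<in>dyck_paths n.
      monom (monom 1 (occ [d_step, u_step, u_step] \<gamma>)) (occ [d_step, u_step] \<gamma>))"

definition SC3 :: "int fps" where
  "SC3 = Abs_fps (\<lambda>n. int (sc 3 n))"

definition dq_at1 :: "int poly fps \<Rightarrow> int fps" where
  "dq_at1 S = Abs_fps (\<lambda>n. poly (pderiv (fps_nth S n)) 1)"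
definition dq3_at1 :: "int poly fps \<Rightarrow> int fps" where
  "dq3_at1 S = Abs_fps (\<lambda>n. poly ((pderiv ^^ 3) (fps_nth S n)) 1)"
text \<open>[d^2/dy dq]_{y=q=1} and [d/dq]_{y=q=1} for series with y outer, q inner.\<close>
definition dydq_at11 :: "int poly poly fps \<Rightarrow> int fps" where
  "dydq_at11 S = Abs_fps (\<lambda>n. poly (map_poly (\<lambda>c. poly c 1) (pderiv (map_poly pderiv (fps_nth S n)))) 1)"
definition dq_at11 :: "int poly poly fps \<Rightarrow> int fps" where
  "dq_at11 S = Abs_fps (\<lambda>n. poly (map_poly (\<lambda>c. poly c 1) (map_poly pderiv (fps_nth S n))) 1)"

end

theory Submission
  imports Defs
begin

text \<open>Covering pairs of \<open>\<D>\<^sub>n\<close> are exactly the flips of a valley \<open>du\<close> into a peak \<open>ud\<close>, so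
\<open>sc\<^sub>3(\<D>\<^sub>n)\<close> is the number of pairs of a path \<open>\<gamma>\<close> and three successive valley flips starting at
\<open>\<gamma>\<close>. Flipping a valley changes only a window of four steps around it, so the number of valleys
after a flip is \<open>#du - 1\<close> plus one for a \<open>d\<close> just before and one for a \<open>u\<close> just after the
valley. Iterating this local bookkeeping three times expresses the number of such triples from
\<open>\<gamma>\<close> as
  \<open>k(k-1)(k-2) + 3(k-1)(#ddu + #duu) + 2#dduu + 2#dudu + #dddu + #duuu\<close>, with \<open>k = #du\<close>.
Reversing and complementing a Dyck path is a bijection of \<open>\<D>\<^sub>n\<close> exchanging \<open>ddu\<close> with \<open>duu\<close> and
\<open>dddu\<close> with \<open>duuu\<close>, so summed over \<open>\<D>\<^sub>n\<close> this agrees with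
  \<open>k(k-1)(k-2) + 6(k-1)#duu + 2#dduu + 2#dudu + 2#duuu\<close>,
and the derivatives of the generating series at \<open>q = y = 1\<close> are exactly the sums over \<open>\<D>\<^sub>n\<close> of
these falling factorials and products of occurrence counts.\<close>

section \<open>Valleys and the cover relation\<close>

definition valley :: "bool list \<Rightarrow> nat \<Rightarrow> bool" where
  "valley g i \<longleftrightarrow> Suc i < length g \<and> \<not> g ! i \<and> g ! Suc i"

definition valleys :: "bool list \<Rightarrow> nat set" where
  "valleys g = {i. valley g i}"

definition flip_valley :: "bool list \<Rightarrow> nat \<Rightarrow> bool list" where
  "flip_valley g i = g[i := True, Suc i := False]"

lemma height_0 [simp]: "height g 0 = 0"
  by (simp add: height_def)

lemma height_Suc: "height g (Suc i) = height g i + (if g ! i then 1 else -1)"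
  by (simp add: height_def)

lemma even_height_plus_index: "even (height g j + int j)"
  by (induction j) (auto simp: height_Suc)

lemma eq_if_heights_eq:
  assumes "length a = length b" "\<forall>j \<le> length a. height a j = height b j"
  shows "a = b"
proof (rule nth_equalityI)
  fix j assume "j < length a"
  then have "height a (Suc j) - height a j = height b (Suc j) - height b j"
    using assms by simp
  then show "a ! j = b ! j"
    by (auto simp: height_Suc split: if_splits)
qed (use assms in simp)

lemma length_dyck_path: "g \<in> dyck_paths n \<Longrightarrow> length g = 2 * n"
  by (simp add: dyck_paths_def)

lemma finite_dyck_paths [simp]: "finite (dyck_paths n)"
proof -
  have "dyck_paths n \<subseteq> {xs. set xs \<subseteq> UNIV \<and> length xs = 2 * n}"
    by (auto simp: dyck_paths_def)
  then show ?thesis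
    using finite_lists_length_eq[of "UNIV :: bool set" "2 * n"] finite_subset by auto
qed

lemma finite_valleys [simp]: "finite (valleys g)"
  by (rule finite_subset[of _ "{..<length g}"]) (auto simp: valleys_def valley_def)

lemma length_flip_valley [simp]: "length (flip_valley g i) = length g"
  by (simp add: flip_valley_def)

lemma nth_flip_valley:
  "Suc i < length g \<Longrightarrow>
    flip_valley g i ! p = (if p = i then True else if p = Suc i then False else g ! p)"
  by (simp add: flip_valley_def nth_list_update)

lemma height_flip_valley:
  assumes "valley g i"
  shows "height (flip_valley g i) j = height g j + (if j = Suc i then 2 else 0)"
proof (induction j)
  case (Suc j)
  have "Suc i < length g" "\<not> g ! i" "g ! Suc i"
    using assms by (auto simp: valley_def)
  with Suc show ?case
    by (auto simp: height_Suc nth_flip_valley)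
qed simp

lemma valley_bounds:
  assumes "g \<in> dyck_paths n" "valley g i"
  shows "0 < i" "i + 3 \<le> length g"
proof -
  have len: "length g = 2 * n" and nonneg: "\<forall>j \<le> 2 * n. 0 \<le> height g j"
    and ends: "height g (2 * n) = 0"
    using assms(1) by (auto simp: dyck_paths_def)
  have v: "Suc i < 2 * n" "\<not> g ! i" "g ! Suc i"
    using assms(2) len by (auto simp: valley_def)
  show "0 < i"
  proof (rule ccontr)
    assume "\<not> 0 < i"
    then have "i = 0" by simp
    then have "height g 1 = -1"
      using v by (simp add: height_Suc[of g 0, simplified])
    moreover have "0 \<le> height g 1"
      using v nonneg by simp
    ultimately show False by simp
  qed
  show "i + 3 \<le> length g"
  proof (rule ccontr)
    assume "\<not> i + 3 \<le> length g"
    then have "2 * n = Suc (Suc i)" using v len by simp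
    then have "height g (Suc i) = -1"
      using ends v by (simp add: height_Suc[of g "Suc i"])
    moreover have "0 \<le> height g (Suc i)"
      using v nonneg by simp
    ultimately show False by simp
  qed
qed

lemma flip_valley_dyck:
  assumes "g \<in> dyck_paths n" "valley g i"
  shows "flip_valley g i \<in> dyck_paths n"
  using assms valley_bounds[OF assms] by (auto simp: dyck_paths_def height_flip_valley)

lemma path_le_flip_valley:
  assumes "valley g i"
  shows "path_le g (flip_valley g i)" "flip_valley g i \<noteq> g"
proof -
  show "path_le g (flip_valley g i)"
    by (simp add: path_le_def height_flip_valley[OF assms])
  show "flip_valley g i \<noteq> g"
    using height_flip_valley[OF assms, of "Suc i"] by auto
qed

lemma even_gap_cases:
  "(x::int) \<le> y \<Longrightarrow> y \<le> x + 2 \<Longrightarrow> even (y - x) \<Longrightarrow> y = x \<or> y = x + 2"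
  by presburger

lemma path_between_flip_valley:
  assumes "valley g i" "length c = length g"
    and "path_le g c" "path_le c (flip_valley g i)"
  shows "c = g \<or> c = flip_valley g i"
proof -
  have lower: "height g j \<le> height c j" if "j \<le> length g" for j
    using assms(3) that by (simp add: path_le_def)
  have upper: "height c j \<le> height g j + (if j = Suc i then 2 else 0)" if "j \<le> length g" for j
    using assms(2,4) that by (simp add: path_le_def height_flip_valley[OF assms(1)])
  have off_valley: "height c j = height g j" if "j \<le> length g" "j \<noteq> Suc i" for j
    using lower[OF that(1)] upper[OF that(1)] that(2) by simp
  have "Suc i \<le> length g"
    using assms(1) by (simp add: valley_def)
  moreover have "even (height c (Suc i) - height g (Suc i))"
    using dvd_diff[OF even_height_plus_index[of c "Suc i"] even_height_plus_index[of g "Suc i"]]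
    by simp
  ultimately have "height c (Suc i) = height g (Suc i) \<or> height c (Suc i) = height g (Suc i) + 2"
    using lower upper even_gap_cases by fastforce
  then show ?thesis
  proof
    assume "height c (Suc i) = height g (Suc i)"
    then have "c = g"
      using assms(2) off_valley by (intro eq_if_heights_eq) auto
    then show ?thesis ..
  next
    assume "height c (Suc i) = height g (Suc i) + 2"
    then have "c = flip_valley g i"
      using assms(2) off_valley by (intro eq_if_heights_eq) (auto simp: height_flip_valley[OF assms(1)])
    then show ?thesis ..
  qed
qed

lemma valley_at_lowest_gap:
  assumes "a \<in> dyck_paths n" "b \<in> dyck_paths n"
    and gap: "j \<le> 2 * n" "height a j < height b j"
    and lowest: "\<And>j'. j' \<le> 2 * n \<Longrightarrow> height a j' < height b j' \<Longrightarrow> height a j \<le> height a j'"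
  shows "\<exists>i. j = Suc i \<and> valley a i"
proof -
  have ends: "height a (2 * n) = 0" "height b (2 * n) = 0" and len: "length a = 2 * n"
    using assms(1,2) by (auto simp: dyck_paths_def)
  have "j \<noteq> 0" "j \<noteq> 2 * n"
    using gap ends by (metis height_0 less_irrefl)+
  then obtain i where ij: "j = Suc i" and jn: "j < 2 * n"
    using gap by (cases j) auto
  have "\<not> a ! i"
  proof
    assume "a ! i"
    then have "height a i < height b i" and "height a j = height a i + 1"
      using gap ij by (auto simp: height_Suc split: if_splits)
    then show False
      using lowest[of i] ij jn by simp
  qed
  moreover have "a ! Suc i"
  proof (rule ccontr)
    assume "\<not> a ! Suc i"
    then have "height a (Suc j) < height b (Suc j)" and "height a (Suc j) = height a j - 1"
      using gap ij by (auto simp: height_Suc split: if_splits)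
    then show False
      using lowest[of "Suc j"] jn by simp
  qed
  ultimately show ?thesis
    using ij jn len by (simp add: valley_def)
qed

text \<open>A gap between \<open>a\<close> and \<open>b\<close> where \<open>a\<close> is lowest sits at the bottom of a valley of \<open>a\<close>,
and by parity the gap there is at least two.\<close>

lemma exists_flip_valley_le:
  assumes "a \<in> dyck_paths n" "b \<in> dyck_paths n" "path_le a b" "a \<noteq> b"
  shows "\<exists>i. valley a i \<and> path_le (flip_valley a i) b"
proof -
  have len: "length a = 2 * n" "length b = 2 * n"
    using assms(1,2) by (simp_all add: length_dyck_path)
  have nonneg: "\<forall>j \<le> 2 * n. 0 \<le> height a j"
    using assms(1) by (auto simp: dyck_paths_def)
  have le: "height a j \<le> height b j" if "j \<le> 2 * n" for j
    using assms(3) that len by (simp add: path_le_def)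
  define P where "P j \<longleftrightarrow> j \<le> 2 * n \<and> height a j < height b j" for j
  have "\<exists>j. P j"
  proof (rule ccontr)
    assume "\<nexists>j. P j"
    then have "a = b"
      using le len by (intro eq_if_heights_eq) (force simp: P_def)+
    with assms(4) show False ..
  qed
  then obtain j where j: "P j" and least: "\<And>j'. P j' \<Longrightarrow> nat (height a j) \<le> nat (height a j')"
    using ex_has_least_nat[of P _ "\<lambda>j. nat (height a j)"] by blast
  have "height a j \<le> height a j'" if "j' \<le> 2 * n" "height a j' < height b j'" for j'
    using least[of j'] that nonneg j by (auto simp: P_def)
  then obtain i where ij: "j = Suc i" and v: "valley a i"
    using valley_at_lowest_gap[OF assms(1,2)] j by (auto simp: P_def)
  have "even (height b j - height a j)"
    using dvd_diff[OF even_height_plus_index[of b j] even_height_plus_index[of a j]] by simp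
  then have "height a j + 2 \<le> height b j"
    using j by (simp add: P_def) presburger
  then have "path_le (flip_valley a i) b"
    using le ij len by (auto simp: path_le_def height_flip_valley[OF v])
  with v show ?thesis by blast
qed

lemma covers_iff_flip_valley:
  assumes "a \<in> dyck_paths n"
  shows "covers n a b \<longleftrightarrow> (\<exists>i. valley a i \<and> b = flip_valley a i)"
proof
  assume cov: "covers n a b"
  then obtain i where v: "valley a i" and le: "path_le (flip_valley a i) b"
    using exists_flip_valley_le[OF assms] by (auto simp: covers_def)
  have "flip_valley a i \<in> dyck_paths n"
    using flip_valley_dyck[OF assms v] .
  then have "flip_valley a i = b"
    using cov le path_le_flip_valley[OF v] by (auto simp: covers_def)
  with v show "\<exists>i. valley a i \<and> b = flip_valley a i" by blast
next
  assume "\<exists>i. valley a i \<and> b = flip_valley a i"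
  then obtain i where v: "valley a i" and b: "b = flip_valley a i" by blast
  have "\<And>c. c \<in> dyck_paths n \<Longrightarrow> path_le a c \<Longrightarrow> path_le c b \<Longrightarrow> c = a \<or> c = b"
    using path_between_flip_valley[OF v] assms b by (simp add: length_dyck_path)
  then show "covers n a b"
    using assms flip_valley_dyck[OF assms v] path_le_flip_valley[OF v] b
    by (auto simp: covers_def)
qed

section \<open>Saturated chains of length three\<close>

lemma flip_valley_inj:
  assumes "valley g i" "valley g i'" "flip_valley g i = flip_valley g i'"
  shows "i = i'"
proof (rule ccontr)
  assume "i \<noteq> i'"
  then consider "i < i'" | "i' < i" by linarith
  then show False
  proof cases
    case 1
    have "flip_valley g i ! i"
      using assms(1) by (simp add: nth_flip_valley valley_def)
    moreover have "\<not> flip_valley g i' ! i"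
      using 1 assms(1,2) by (simp add: nth_flip_valley valley_def)
    ultimately show False
      using assms(3) by simp
  next
    case 2
    have "flip_valley g i' ! i'"
      using assms(2) by (simp add: nth_flip_valley valley_def)
    moreover have "\<not> flip_valley g i ! i'"
      using 2 assms(1,2) by (simp add: nth_flip_valley valley_def)
    ultimately show False
      using assms(3) by simp
  qed
qed

definition valley_flip_chain :: "bool list \<times> nat \<times> nat \<times> nat \<Rightarrow> bool list list" where
  "valley_flip_chain = (\<lambda>(a, i, j, k).
     [a, flip_valley a i, flip_valley (flip_valley a i) j,
      flip_valley (flip_valley (flip_valley a i) j) k])"

definition valley_triples :: "nat \<Rightarrow> (bool list \<times> nat \<times> nat \<times> nat) set" where
  "valley_triples n = (SIGMA a:dyck_paths n. SIGMA i:valleys a. SIGMA j:valleys (flip_valley a i).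
     valleys (flip_valley (flip_valley a i) j))"

lemma valley_flip_chain_in_sat_chains:
  assumes "x \<in> valley_triples n"
  shows "valley_flip_chain x \<in> sat_chains n 3"
proof -
  obtain a i j k where x: "x = (a, i, j, k)" and a: "a \<in> dyck_paths n" and v: "valley a i"
    "valley (flip_valley a i) j" "valley (flip_valley (flip_valley a i) j) k"
    using assms by (cases x) (auto simp: valley_triples_def valleys_def)
  have d1: "flip_valley a i \<in> dyck_paths n"
    using flip_valley_dyck a v by blast
  have d2: "flip_valley (flip_valley a i) j \<in> dyck_paths n"
    using flip_valley_dyck d1 v by blast
  have d3: "flip_valley (flip_valley (flip_valley a i) j) k \<in> dyck_paths n"
    using flip_valley_dyck d2 v by blast
  have "covers n (valley_flip_chain x ! t) (valley_flip_chain x ! (t + 1))" if "t < 3" for t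
  proof -
    from that consider "t = 0" | "t = 1" | "t = 2" by linarith
    then show ?thesis
      using covers_iff_flip_valley a d1 d2 v x by cases (auto simp: valley_flip_chain_def)
  qed
  then show ?thesis
    using a d1 d2 d3 x by (simp add: sat_chains_def valley_flip_chain_def)
qed

lemma sat_chains_3_eq: "sat_chains n 3 = valley_flip_chain ` valley_triples n"
proof
  show "sat_chains n 3 \<subseteq> valley_flip_chain ` valley_triples n"
  proof
    fix cs assume cs: "cs \<in> sat_chains n 3"
    then have "length cs = 4" and set_cs: "set cs \<subseteq> dyck_paths n"
      and cov: "\<forall>i<3. covers n (cs ! i) (cs ! (i + 1))"
      by (auto simp: sat_chains_def)
    then obtain a b c d where cs_eq: "cs = [a, b, c, d]"
      by (auto simp: length_Suc_conv numeral_eq_Suc)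
    then have "covers n a b" "covers n b c" "covers n c d"
      using cov by (auto simp: numeral_eq_Suc less_Suc_eq)
    moreover have "a \<in> dyck_paths n" "b \<in> dyck_paths n" "c \<in> dyck_paths n"
      using set_cs cs_eq by auto
    ultimately obtain i j k where "valley a i" "b = flip_valley a i" "valley b j"
      "c = flip_valley b j" "valley c k" "d = flip_valley c k"
      using covers_iff_flip_valley by meson
    then show "cs \<in> valley_flip_chain ` valley_triples n"
      using \<open>a \<in> dyck_paths n\<close> cs_eq
      by (auto simp: valley_triples_def valley_flip_chain_def valleys_def
          intro!: image_eqI[where x = "(a, i, j, k)"])
  qed
qed (auto intro: valley_flip_chain_in_sat_chains)

lemma inj_on_valley_flip_chain: "inj_on valley_flip_chain (valley_triples n)"
proof (rule inj_onI)
  fix x y assume x: "x \<in> valley_triples n" and y: "y \<in> valley_triples n"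
    and eq: "valley_flip_chain x = valley_flip_chain y"
  obtain a i j k a' i' j' k' where xy: "x = (a, i, j, k)" "y = (a', i', j', k')"
    by (cases x, cases y) auto
  have "a = a'"
    using eq xy by (simp add: valley_flip_chain_def)
  moreover have "i = i'"
    using eq xy x y \<open>a = a'\<close> flip_valley_inj
    by (auto simp: valley_flip_chain_def valley_triples_def valleys_def)
  moreover have "j = j'"
    using eq xy x y \<open>a = a'\<close> \<open>i = i'\<close> flip_valley_inj
    by (auto simp: valley_flip_chain_def valley_triples_def valleys_def)
  moreover have "k = k'"
    using eq xy x y \<open>a = a'\<close> \<open>i = i'\<close> \<open>j = j'\<close> flip_valley_inj
    by (auto simp: valley_flip_chain_def valley_triples_def valleys_def)
  ultimately show "x = y"
    using xy by simp
qed

definition valley_triple_count :: "bool list \<Rightarrow> nat" where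
  "valley_triple_count g = (\<Sum>i\<in>valleys g. \<Sum>j\<in>valleys (flip_valley g i).
     card (valleys (flip_valley (flip_valley g i) j)))"

lemma sc_3_eq_sum_valley_triple_count: "sc 3 n = (\<Sum>g\<in>dyck_paths n. valley_triple_count g)"
proof -
  have "sc 3 n = card (valley_triples n)"
    unfolding sc_def sat_chains_3_eq using card_image[OF inj_on_valley_flip_chain] by simp
  then show ?thesis
    by (simp add: valley_triples_def valley_triple_count_def)
qed

section \<open>Occurrences of factors under a valley flip\<close>

definition occurs_at :: "bool list \<Rightarrow> bool list \<Rightarrow> nat \<Rightarrow> bool" where
  "occurs_at w g j \<longleftrightarrow> j + length w \<le> length g \<and> take (length w) (drop j g) = w"

abbreviation "du \<equiv> [d_step, u_step]"
abbreviation "ddu \<equiv> [d_step, d_step, u_step]"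
abbreviation "duu \<equiv> [d_step, u_step, u_step]"
abbreviation "dduu \<equiv> [d_step, d_step, u_step, u_step]"
abbreviation "dudu \<equiv> [d_step, u_step, d_step, u_step]"
abbreviation "dddu \<equiv> [d_step, d_step, d_step, u_step]"
abbreviation "duuu \<equiv> [d_step, u_step, u_step, u_step]"

lemma occ_eq_card_occurs_at: "occ w g = card {j. occurs_at w g j}"
  by (simp add: occ_def occurs_at_def)

lemma finite_occurs_at [simp]: "finite {j. occurs_at w g j}"
  by (rule finite_subset[of _ "{..length g}"]) (auto simp: occurs_at_def)

lemma occurs_at_iff_nth:
  "occurs_at w g j \<longleftrightarrow> j + length w \<le> length g \<and> (\<forall>k < length w. g ! (j + k) = w ! k)"
  unfolding occurs_at_def by (auto simp: list_eq_iff_nth_eq)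

lemma occurs_at_2:
  "occurs_at [a, b] g j \<longleftrightarrow> j + 2 \<le> length g \<and> g ! j = a \<and> g ! Suc j = b"
  by (auto simp: occurs_at_iff_nth less_Suc_eq numeral_eq_Suc)

lemma occurs_at_3:
  "occurs_at [a, b, c] g j \<longleftrightarrow>
     j + 3 \<le> length g \<and> g ! j = a \<and> g ! Suc j = b \<and> g ! Suc (Suc j) = c"
  by (auto simp: occurs_at_iff_nth less_Suc_eq numeral_eq_Suc)

lemma occurs_at_4:
  "occurs_at [a, b, c, d] g j \<longleftrightarrow>
     j + 4 \<le> length g \<and> g ! j = a \<and> g ! Suc j = b \<and> g ! Suc (Suc j) = c \<and> g ! Suc (Suc (Suc j)) = d"
  by (auto simp: occurs_at_iff_nth less_Suc_eq numeral_eq_Suc)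

lemma occ_eq_sum_occurs_at:
  "w \<noteq> [] \<Longrightarrow> int (occ w g) = (\<Sum>j<length g. of_bool (occurs_at w g j))"
proof -
  assume "w \<noteq> []"
  then have "{..<length g} \<inter> {j. occurs_at w g j} = {j. occurs_at w g j}"
    by (cases w) (auto simp: occurs_at_def)
  then show ?thesis
    by (simp add: occ_eq_card_occurs_at)
qed

lemma occurs_at_flip_valley_far:
  assumes "valley g i" "j + length w \<le> i \<or> Suc (Suc i) \<le> j"
  shows "occurs_at w (flip_valley g i) j \<longleftrightarrow> occurs_at w g j"
proof -
  have "Suc i < length g"
    using assms(1) by (simp add: valley_def)
  then have "flip_valley g i ! (j + k) = g ! (j + k)" if "k < length w" for k
    using assms(2) that by (auto simp: nth_flip_valley)
  then show ?thesis
    by (simp add: occurs_at_iff_nth)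
qed

lemma occ_flip_valley:
  assumes "valley g i" "w \<noteq> []"
  shows "int (occ w (flip_valley g i)) = int (occ w g) +
    (\<Sum>j\<in>{Suc i - length w..Suc i}.
       of_bool (occurs_at w (flip_valley g i) j) - of_bool (occurs_at w g j))"
proof -
  define \<delta> where "\<delta> j = (of_bool (occurs_at w (flip_valley g i) j) - of_bool (occurs_at w g j) :: int)"
    for j
  have window: "{Suc i - length w..Suc i} \<subseteq> {..<length g}"
    using assms(1) by (auto simp: valley_def)
  have "\<delta> j = 0" if "j \<notin> {Suc i - length w..Suc i}" for j
  proof -
    have "j + length w \<le> i \<or> Suc (Suc i) \<le> j"
      using that by auto
    then show ?thesis
      by (simp add: \<delta>_def occurs_at_flip_valley_far[OF assms(1)])
  qed
  then have "(\<Sum>j<length g. \<delta> j) = (\<Sum>j\<in>{Suc i - length w..Suc i}. \<delta> j)"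
    using window by (intro sum.mono_neutral_right) auto
  moreover have "int (occ w (flip_valley g i)) - int (occ w g) = (\<Sum>j<length g. \<delta> j)"
    using occ_eq_sum_occurs_at[OF assms(2)] by (simp add: \<delta>_def sum_subtractf)
  ultimately show ?thesis
    by (simp add: \<delta>_def)
qed

lemma card_valleys_eq_occ_du: "card (valleys g) = occ du g"
proof -
  have "valleys g = {j. occurs_at du g j}"
    by (auto simp: valleys_def valley_def occurs_at_2)
  then show ?thesis
    by (simp add: occ_eq_card_occurs_at)
qed

lemma card_valleys_flip_valley:
  assumes "g \<in> dyck_paths n" "valley g i"
  shows "int (card (valleys (flip_valley g i))) =
    int (card (valleys g)) - 1 + of_bool (\<not> g ! (i - 1)) + of_bool (g ! (i + 2))"
proof -
  obtain i0 where i: "i = Suc i0" "Suc (Suc (Suc i0)) < length g"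
    using valley_bounds[OF assms] by (cases i) auto
  have v: "\<not> g ! i" "g ! Suc i"
    using assms(2) by (auto simp: valley_def)
  have "{Suc i - length du..Suc i} = {i0, Suc i0, Suc (Suc i0)}"
    using i by auto
  then show ?thesis
    unfolding card_valleys_eq_occ_du occ_flip_valley[OF assms(2), of du, simplified]
    using i v by (simp add: occurs_at_2 nth_flip_valley)
qed

lemma occ_ddu_plus_duu_flip_valley:
  assumes "g \<in> dyck_paths n" "valley g i"
  shows "int (occ ddu (flip_valley g i)) + int (occ duu (flip_valley g i)) =
    int (occ ddu g) + int (occ duu g) - of_bool (\<not> g ! (i - 1)) - of_bool (g ! (i + 2))
    + of_bool (2 \<le> i \<and> \<not> g ! (i - 2)) + of_bool (i + 3 < length g \<and> g ! (i + 3))"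
proof -
  obtain i0 where i: "i = Suc i0" "Suc (Suc (Suc i0)) < length g"
    using valley_bounds[OF assms] by (cases i) auto
  have v: "\<not> g ! i" "g ! Suc i"
    using assms(2) by (auto simp: valley_def)
  note occ_ddu = occ_flip_valley[OF assms(2), of ddu, simplified]
  note occ_duu = occ_flip_valley[OF assms(2), of duu, simplified]
  show ?thesis
  proof (cases i0)
    case 0
    have "{Suc i - 3..Suc i} = {0, Suc 0, Suc (Suc 0)}"
      using i 0 by auto
    then show ?thesis
      unfolding occ_ddu occ_duu using i v 0
      by (simp add: occurs_at_3 nth_flip_valley numeral_eq_Suc del: sum_of_bool_eq)
  next
    case (Suc i1)
    have "{Suc i - 3..Suc i} = {i1, Suc i1, Suc (Suc i1), Suc (Suc (Suc i1))}"
      using i Suc by auto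
    then show ?thesis
      unfolding occ_ddu occ_duu using i v Suc
      by (simp add: occurs_at_3 nth_flip_valley numeral_eq_Suc add.assoc del: sum_of_bool_eq)
  qed
qed

section \<open>Counting triples of valley flips\<close>

lemma card_eq_if_shift:
  fixes A B :: "nat set"
  assumes "\<And>i. i \<in> B \<longleftrightarrow> k \<le> i \<and> i - k \<in> A"
  shows "card B = card A"
proof -
  have "B = (\<lambda>j. j + k) ` A"
  proof (rule set_eqI)
    fix i
    show "i \<in> B \<longleftrightarrow> i \<in> (\<lambda>j. j + k) ` A"
      using assms[of i] by (auto simp: image_iff intro!: bexI[of _ "i - k"])
  qed
  then show ?thesis
    by (simp add: card_image)
qed

lemma sum_valleys_d_before:
  assumes "g \<in> dyck_paths n"
  shows "(\<Sum>i\<in>valleys g. of_bool (\<not> g ! (i - 1)) :: int) = int (occ ddu g)"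
proof -
  have "card (valleys g \<inter> {i. \<not> g ! (i - 1)}) = card {j. occurs_at ddu g j}"
  proof (rule card_eq_if_shift[where k = 1])
    fix i
    show "i \<in> valleys g \<inter> {i. \<not> g ! (i - 1)} \<longleftrightarrow> 1 \<le> i \<and> i - 1 \<in> {j. occurs_at ddu g j}"
      using valley_bounds[OF assms, of i] by (cases i) (auto simp: valleys_def valley_def occurs_at_3)
  qed
  then show ?thesis
    by (simp add: occ_eq_card_occurs_at)
qed

lemma sum_valleys_u_after:
  assumes "g \<in> dyck_paths n"
  shows "(\<Sum>i\<in>valleys g. of_bool (g ! (i + 2)) :: int) = int (occ duu g)"
proof -
  have "card (valleys g \<inter> {i. g ! (i + 2)}) = card {j. occurs_at duu g j}"
  proof (rule card_eq_if_shift[where k = 0])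
    fix i
    show "i \<in> valleys g \<inter> {i. g ! (i + 2)} \<longleftrightarrow> 0 \<le> i \<and> i - 0 \<in> {j. occurs_at duu g j}"
      using valley_bounds[OF assms, of i] by (auto simp: valleys_def valley_def occurs_at_3 numeral_eq_Suc)
  qed
  then show ?thesis
    by (simp add: occ_eq_card_occurs_at)
qed

lemma sum_valleys_d_before_u_after:
  assumes "g \<in> dyck_paths n"
  shows "(\<Sum>i\<in>valleys g. of_bool (\<not> g ! (i - 1) \<and> g ! (i + 2)) :: int) = int (occ dduu g)"
proof -
  have "card (valleys g \<inter> {i. \<not> g ! (i - 1) \<and> g ! (i + 2)}) = card {j. occurs_at dduu g j}"
  proof (rule card_eq_if_shift[where k = 1])
    fix i
    show "i \<in> valleys g \<inter> {i. \<not> g ! (i - 1) \<and> g ! (i + 2)} \<longleftrightarrow>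
        1 \<le> i \<and> i - 1 \<in> {j. occurs_at dduu g j}"
      using valley_bounds[OF assms, of i]
      by (cases i) (auto simp: valleys_def valley_def occurs_at_4 numeral_eq_Suc)
  qed
  then show ?thesis
    by (simp add: occ_eq_card_occurs_at)
qed

lemma card_occurs_at_disjoint_Un:
  assumes "\<And>j. \<not> (occurs_at v g j \<and> occurs_at w g j)"
  shows "card ({j. occurs_at v g j} \<union> {j. occurs_at w g j}) = occ v g + occ w g"
proof -
  have "{j. occurs_at v g j} \<inter> {j. occurs_at w g j} = {}"
    using assms by blast
  then show ?thesis
    by (simp add: card_Un_disjoint occ_eq_card_occurs_at)
qed

lemma sum_valleys_d_two_before:
  assumes "g \<in> dyck_paths n"
  shows "(\<Sum>i\<in>valleys g. of_bool (2 \<le> i \<and> \<not> g ! (i - 2)) :: int) =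
    int (occ dddu g) + int (occ dudu g)"
proof -
  have "card (valleys g \<inter> {i. 2 \<le> i \<and> \<not> g ! (i - 2)}) =
      card ({j. occurs_at dddu g j} \<union> {j. occurs_at dudu g j})"
  proof (rule card_eq_if_shift[where k = 2])
    fix i
    show "i \<in> valleys g \<inter> {i. 2 \<le> i \<and> \<not> g ! (i - 2)} \<longleftrightarrow>
        2 \<le> i \<and> i - 2 \<in> {j. occurs_at dddu g j} \<union> {j. occurs_at dudu g j}"
      using valley_bounds[OF assms, of i]
      by (cases i; cases "i - 1") (auto simp: valleys_def valley_def occurs_at_4 numeral_eq_Suc)
  qed
  also have "\<dots> = occ dddu g + occ dudu g"
    by (rule card_occurs_at_disjoint_Un) (simp add: occurs_at_4)
  finally show ?thesis
    by simp
qed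

lemma sum_valleys_u_three_after:
  assumes "g \<in> dyck_paths n"
  shows "(\<Sum>i\<in>valleys g. of_bool (i + 3 < length g \<and> g ! (i + 3)) :: int) =
    int (occ dudu g) + int (occ duuu g)"
proof -
  have "card (valleys g \<inter> {i. i + 3 < length g \<and> g ! (i + 3)}) =
      card ({j. occurs_at dudu g j} \<union> {j. occurs_at duuu g j})"
  proof (rule card_eq_if_shift[where k = 0])
    fix i
    show "i \<in> valleys g \<inter> {i. i + 3 < length g \<and> g ! (i + 3)} \<longleftrightarrow>
        0 \<le> i \<and> i - 0 \<in> {j. occurs_at dudu g j} \<union> {j. occurs_at duuu g j}"
      using valley_bounds[OF assms, of i] by (auto simp: valleys_def valley_def occurs_at_4 numeral_eq_Suc)
  qed
  also have "\<dots> = occ dudu g + occ duuu g"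
    by (rule card_occurs_at_disjoint_Un) (simp add: occurs_at_4)
  finally show ?thesis
    by simp
qed

lemma sum_card_valleys_flip_valley:
  assumes "g \<in> dyck_paths n"
  defines "k \<equiv> int (card (valleys g))"
  shows "(\<Sum>j\<in>valleys g. int (card (valleys (flip_valley g j)))) =
    k * (k - 1) + int (occ ddu g) + int (occ duu g)"
proof -
  have "(\<Sum>j\<in>valleys g. int (card (valleys (flip_valley g j)))) =
      (\<Sum>j\<in>valleys g. (k - 1) + of_bool (\<not> g ! (j - 1)) + of_bool (g ! (j + 2)))"
    using card_valleys_flip_valley[OF assms(1)] by (intro sum.cong) (auto simp: valleys_def k_def)
  also have "\<dots> = k * (k - 1) + int (occ ddu g) + int (occ duu g)"
    using sum_valleys_d_before[OF assms(1)] sum_valleys_u_after[OF assms(1)]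
    by (simp add: sum.distrib k_def)
  finally show ?thesis .
qed

lemma sum_card_valleys_flip_flip_valley:
  assumes "g \<in> dyck_paths n" "valley g i"
  defines "k \<equiv> int (card (valleys g))"
    and "a \<equiv> of_bool (\<not> g ! (i - 1)) :: int" and "b \<equiv> of_bool (g ! (i + 2)) :: int"
  shows "(\<Sum>j\<in>valleys (flip_valley g i). int (card (valleys (flip_valley (flip_valley g i) j)))) =
    (k - 1) * (k - 2) + (2 * k - 3) * (a + b) + 2 * of_bool (\<not> g ! (i - 1) \<and> g ! (i + 2))
    + int (occ ddu g) + int (occ duu g)
    + of_bool (2 \<le> i \<and> \<not> g ! (i - 2)) + of_bool (i + 3 < length g \<and> g ! (i + 3))"
proof -
  have "(\<Sum>j\<in>valleys (flip_valley g i). int (card (valleys (flip_valley (flip_valley g i) j)))) =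
      (k - 1 + a + b) * (k - 2 + a + b)
      + int (occ ddu (flip_valley g i)) + int (occ duu (flip_valley g i))"
    using sum_card_valleys_flip_valley[OF flip_valley_dyck[OF assms(1,2)]]
      card_valleys_flip_valley[OF assms(1,2)]
    by (simp add: k_def a_def b_def)
  also have "\<dots> = (k - 1 + a + b) * (k - 2 + a + b) + int (occ ddu g) + int (occ duu g) - a - b
      + of_bool (2 \<le> i \<and> \<not> g ! (i - 2)) + of_bool (i + 3 < length g \<and> g ! (i + 3))"
    using occ_ddu_plus_duu_flip_valley[OF assms(1,2)] by (simp add: a_def b_def)
  \<comment> \<open>\<open>a\<close> and \<open>b\<close> are 0 or 1, so \<open>a * a = a\<close> and \<open>b * b = b\<close>\<close>
  also have "\<dots> = (k - 1) * (k - 2) + (2 * k - 3) * (a + b) + 2 * (a * b)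
      + int (occ ddu g) + int (occ duu g)
      + of_bool (2 \<le> i \<and> \<not> g ! (i - 2)) + of_bool (i + 3 < length g \<and> g ! (i + 3))"
    by (simp add: a_def b_def algebra_simps)
  finally show ?thesis
    by (simp add: a_def b_def)
qed

lemma valley_triple_count_eq:
  assumes "g \<in> dyck_paths n"
  defines "k \<equiv> int (occ du g)"
  shows "int (valley_triple_count g) =
    k * (k - 1) * (k - 2) + 3 * (k - 1) * (int (occ ddu g) + int (occ duu g))
    + 2 * int (occ dduu g) + 2 * int (occ dudu g) + int (occ dddu g) + int (occ duuu g)"
proof -
  define P where "P = int (occ ddu g) + int (occ duu g)"
  define a where "a i = (of_bool (\<not> g ! (i - 1)) :: int)" for i
  define b where "b i = (of_bool (g ! (i + 2)) :: int)" for i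
  define ab where "ab i = (of_bool (\<not> g ! (i - 1) \<and> g ! (i + 2)) :: int)" for i
  define c where "c i = (of_bool (2 \<le> i \<and> \<not> g ! (i - 2)) :: int)" for i
  define f where "f i = (of_bool (i + 3 < length g \<and> g ! (i + 3)) :: int)" for i
  have card_valleys: "int (card (valleys g)) = k"
    by (simp add: k_def card_valleys_eq_occ_du)
  have "int (valley_triple_count g) =
      (\<Sum>i\<in>valleys g. (k - 1) * (k - 2) + (2 * k - 3) * a i + (2 * k - 3) * b i + 2 * ab i
        + P + c i + f i)"
    unfolding valley_triple_count_def of_nat_sum
    using sum_card_valleys_flip_flip_valley[OF assms(1)] card_valleys
    by (intro sum.cong) (auto simp: valleys_def P_def a_def b_def ab_def c_def f_def algebra_simps)
  also have "\<dots> = k * ((k - 1) * (k - 2)) + (2 * k - 3) * sum a (valleys g)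
      + (2 * k - 3) * sum b (valleys g) + 2 * sum ab (valleys g) + k * P
      + sum c (valleys g) + sum f (valleys g)"
    by (simp add: sum.distrib sum_distrib_left card_valleys)
  also have "\<dots> = k * (k - 1) * (k - 2) + 3 * (k - 1) * P + 2 * int (occ dduu g)
      + 2 * int (occ dudu g) + int (occ dddu g) + int (occ duuu g)"
    unfolding a_def b_def ab_def c_def f_def sum_valleys_d_before[OF assms(1)]
      sum_valleys_u_after[OF assms(1)] sum_valleys_d_before_u_after[OF assms(1)]
      sum_valleys_d_two_before[OF assms(1)] sum_valleys_u_three_after[OF assms(1)]
    by (simp add: P_def algebra_simps)
  finally show ?thesis
    by (simp add: P_def)
qed

section \<open>Reflection of Dyck paths\<close>

definition mirror :: "bool list \<Rightarrow> bool list" where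
  "mirror g = rev (map Not g)"

lemma mirror_mirror [simp]: "mirror (mirror g) = g"
  by (simp add: mirror_def rev_map comp_def)

lemma length_mirror [simp]: "length (mirror g) = length g"
  by (simp add: mirror_def)

lemma nth_mirror: "p < length g \<Longrightarrow> mirror g ! p = (\<not> g ! (length g - Suc p))"
  by (simp add: mirror_def rev_nth)

lemma height_mirror:
  "i \<le> length g \<Longrightarrow> height (mirror g) i = height g (length g - i) - height g (length g)"
proof (induction i)
  case (Suc i)
  then have "height g (length g - i) =
      height g (length g - Suc i) + (if g ! (length g - Suc i) then 1 else -1)"
    using height_Suc[of g "length g - Suc i"] by (simp add: Suc_diff_Suc)
  with Suc show ?case
    by (simp add: height_Suc nth_mirror)
qed simp

lemma mirror_dyck: "g \<in> dyck_paths n \<Longrightarrow> mirror g \<in> dyck_paths n"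
  by (auto simp: dyck_paths_def height_mirror)

lemma sum_dyck_paths_mirror: "(\<Sum>g\<in>dyck_paths n. f (mirror g)) = (\<Sum>g\<in>dyck_paths n. f g)"
  by (rule sum.reindex_bij_witness[where i = mirror and j = mirror]) (auto simp: mirror_dyck)

lemma all_less_reverse_index: "(\<forall>k < l. P k) \<longleftrightarrow> (\<forall>k < l. P (l - Suc k))"
proof
  assume reversed: "\<forall>k < l. P (l - Suc k)"
  show "\<forall>k < l. P k"
  proof (intro allI impI)
    fix k assume "k < l"
    then have "l - Suc k < l" and "l - Suc (l - Suc k) = k"
      by simp_all
    then have "P (l - Suc (l - Suc k))" and "l - Suc (l - Suc k) = k"
      using reversed by blast+
    then show "P k" by simp
  qed
qed auto

lemma occurs_at_mirror:
  assumes "j + length w \<le> length g"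
  shows "occurs_at w (mirror g) j \<longleftrightarrow> occurs_at (mirror w) g (length g - length w - j)"
proof -
  define l where "l = length w"
  have "occurs_at (mirror w) g (length g - l - j) \<longleftrightarrow>
      (\<forall>k < l. g ! (length g - l - j + k) = (\<not> w ! (l - Suc k)))"
    using assms by (auto simp: occurs_at_iff_nth nth_mirror l_def)
  also have "\<dots> \<longleftrightarrow> (\<forall>k < l. g ! (length g - l - j + (l - Suc k)) = (\<not> w ! (l - Suc (l - Suc k))))"
    by (rule all_less_reverse_index)
  also have "\<dots> \<longleftrightarrow> (\<forall>k < l. (\<not> g ! (length g - Suc (j + k))) = w ! k)"
  proof -
    have "length g - l - j + (l - Suc k) = length g - Suc (j + k) \<and> l - Suc (l - Suc k) = k"
      if "k < l" for k
      using assms that by (auto simp: l_def)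
    then show ?thesis
      by auto
  qed
  also have "\<dots> \<longleftrightarrow> occurs_at w (mirror g) j"
    using assms by (auto simp: occurs_at_iff_nth nth_mirror l_def)
  finally show ?thesis
    by (simp add: l_def)
qed

lemma occ_mirror: "occ w (mirror g) = occ (mirror w) g"
proof -
  define r where "r j = length g - length w - j" for j
  have "{j. occurs_at w (mirror g) j} = r ` {j. occurs_at (mirror w) g j}"
  proof (rule set_eqI)
    fix j
    show "j \<in> {j. occurs_at w (mirror g) j} \<longleftrightarrow> j \<in> r ` {j. occurs_at (mirror w) g j}"
    proof
      assume "j \<in> {j. occurs_at w (mirror g) j}"
      then have "occurs_at (mirror w) g (r j)" and "j = r (r j)"
        using occurs_at_mirror by (auto simp: occurs_at_def r_def)
      then show "j \<in> r ` {j. occurs_at (mirror w) g j}" by blast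
    next
      assume "j \<in> r ` {j. occurs_at (mirror w) g j}"
      then obtain j' where "occurs_at (mirror w) g j'" and "j = r j'" by blast
      then show "j \<in> {j. occurs_at w (mirror g) j}"
        using occurs_at_mirror[of j w g] by (auto simp: occurs_at_def r_def)
    qed
  qed
  moreover have "inj_on r {j. occurs_at (mirror w) g j}"
    by (rule inj_onI) (auto simp: r_def occurs_at_def)
  ultimately show ?thesis
    by (simp add: occ_eq_card_occurs_at card_image)
qed

definition sc_3_term :: "bool list \<Rightarrow> int" where
  "sc_3_term g = 2 * int (occ dduu g) + 2 * int (occ dudu g) + 2 * int (occ duuu g)
    + int (occ du g) * (int (occ du g) - 1) * (int (occ du g) - 2)
    + 6 * (int (occ du g) * int (occ duu g) - int (occ duu g))"

lemma valley_triple_count_plus_mirror: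
  assumes "g \<in> dyck_paths n"
  shows "int (valley_triple_count g) + int (valley_triple_count (mirror g)) =
    sc_3_term g + sc_3_term (mirror g)"
proof -
  have "occ du (mirror g) = occ du g" "occ ddu (mirror g) = occ duu g"
    "occ duu (mirror g) = occ ddu g" "occ dduu (mirror g) = occ dduu g"
    "occ dudu (mirror g) = occ dudu g" "occ dddu (mirror g) = occ duuu g"
    "occ duuu (mirror g) = occ dddu g"
    by (subst occ_mirror; simp add: mirror_def)+
  then show ?thesis
    unfolding valley_triple_count_eq[OF assms] valley_triple_count_eq[OF mirror_dyck[OF assms]]
      sc_3_term_def
    by (simp add: algebra_simps)
qed

lemma sum_valley_triple_count_eq:
  "(\<Sum>g\<in>dyck_paths n. int (valley_triple_count g)) = (\<Sum>g\<in>dyck_paths n. sc_3_term g)"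
proof -
  have "2 * (\<Sum>g\<in>dyck_paths n. int (valley_triple_count g)) =
      (\<Sum>g\<in>dyck_paths n. int (valley_triple_count g) + int (valley_triple_count (mirror g)))"
    by (simp add: sum.distrib sum_dyck_paths_mirror[of "\<lambda>g. int (valley_triple_count g)"])
  also have "\<dots> = (\<Sum>g\<in>dyck_paths n. sc_3_term g + sc_3_term (mirror g))"
    by (rule sum.cong) (simp_all add: valley_triple_count_plus_mirror)
  also have "\<dots> = 2 * (\<Sum>g\<in>dyck_paths n. sc_3_term g)"
    by (simp add: sum.distrib sum_dyck_paths_mirror[of sc_3_term])
  finally show ?thesis
    by simp
qed

section \<open>Coefficients of the derivatives of the generating series\<close>

lemma pderiv_sum: "pderiv (sum f S) = (\<Sum>x\<in>S. pderiv (f x))"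
  using higher_pderiv_sum[of 1 f S] by simp

lemma map_poly_sum:
  assumes "\<And>a b. h (a + b) = h a + h b" "h 0 = 0"
  shows "map_poly h (sum f S) = (\<Sum>x\<in>S. map_poly h (f x))"
proof (induction S rule: infinite_finite_induct)
  case (insert x F)
  have "map_poly h (f x + sum f F) = map_poly h (f x) + map_poly h (sum f F)"
    by (rule poly_eqI) (simp add: coeff_map_poly assms)
  with insert show ?case
    by simp
qed simp_all

lemma poly_pderiv3_monom_1:
  "poly ((pderiv ^^ 3) (monom (1::int) k)) 1 = int k * (int k - 1) * (int k - 2)"
proof -
  have "(pderiv ^^ 3) (monom (1::int) k) = pderiv (pderiv (pderiv (monom 1 k)))"
    by (simp add: numeral_3_eq_3)
  also have "\<dots> = monom (of_nat (k - 1 - 1) * (of_nat (k - 1) * of_nat k)) (k - 1 - 1 - 1)"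
    by (simp add: pderiv_monom)
  finally show ?thesis
    by (cases k; cases "k - 1") (auto simp: poly_monom algebra_simps)
qed

lemma fps_nth_dq_at1_gf_factor:
  "fps_nth (dq_at1 (gf_factor w)) n = (\<Sum>g\<in>dyck_paths n. int (occ w g))"
  by (simp add: dq_at1_def gf_factor_def pderiv_sum poly_sum pderiv_monom poly_monom)

lemma fps_nth_dq3_at1_gf_factor:
  "fps_nth (dq3_at1 (gf_factor w)) n =
    (\<Sum>g\<in>dyck_paths n. int (occ w g) * (int (occ w g) - 1) * (int (occ w g) - 2))"
  by (simp add: dq3_at1_def gf_factor_def higher_pderiv_sum poly_sum poly_pderiv3_monom_1
      del: funpow.simps)

lemma fps_nth_dydq_at11_F_series:
  "fps_nth (dydq_at11 F_series) n = (\<Sum>g\<in>dyck_paths n. int (occ du g) * int (occ duu g))"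
  by (simp add: dydq_at11_def F_series_def map_poly_sum pderiv_add pderiv_sum poly_sum map_poly_monom
      pderiv_monom poly_monom)

lemma fps_nth_dq_at11_F_series:
  "fps_nth (dq_at11 F_series) n = (\<Sum>g\<in>dyck_paths n. int (occ duu g))"
  by (simp add: dq_at11_def F_series_def map_poly_sum pderiv_add pderiv_sum poly_sum map_poly_monom
      pderiv_monom poly_monom)

theorem mainTheorem7:
  shows "SC3 = 2 * dq_at1 A_series + 2 * dq_at1 B_series + 2 * dq_at1 C_series
              + dq3_at1 V_series + 6 * (dydq_at11 F_series - dq_at11 F_series)"
proof (rule fps_ext)
  fix n
  have SC3_nth: "fps_nth SC3 n = (\<Sum>g\<in>dyck_paths n. sc_3_term g)"
    by (simp add: SC3_def sc_3_eq_sum_valley_triple_count sum_valley_triple_count_eq[symmetric])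
  have two: "(2 :: int fps) = fps_const 2" and six: "(6 :: int fps) = fps_const 6"
    by (simp_all add: fps_numeral_fps_const)
  show "fps_nth SC3 n = fps_nth (2 * dq_at1 A_series + 2 * dq_at1 B_series
      + 2 * dq_at1 C_series + dq3_at1 V_series + 6 * (dydq_at11 F_series - dq_at11 F_series)) n"
    unfolding two six
    by (simp add: SC3_nth A_series_def B_series_def C_series_def V_series_def sc_3_term_def
        fps_nth_dq_at1_gf_factor fps_nth_dq3_at1_gf_factor fps_nth_dydq_at11_F_series
        fps_nth_dq_at11_F_series sum.distrib sum_distrib_left sum_subtractf algebra_simps)
qed

end
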